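(* Let $M=M_{\bar0}\oplus M_{\bar1}$ be an $\mathcal{R}$-module which is free of rank $1$ as a $U(\eta)$-module, $\eta=\mathbb{C}L_{0,0}\oplus\mathbb{C}G_{0,0}$, with a homogeneous free generator $1\in M_{\bar0}$, so $M=\mathbb{C}[L_{0,0}]1\oplus G_{0,0}\mathbb{C}[L_{0,0}]1$. Write $f(t^2)1:=f(L_{0,0})1$ and $t1:=G_{0,0}1$. Suppose $\lambda\in\mathbb{C}^*$ and $a,b\in\mathbb{C}$ are such that for all $m\in\mathbb{Z}$, $i\in\mathbb{Z}_+$ and $f\in\mathbb{C}[t^2]$, $L_{m,i}f(t^2)1=\lambda^m(\delta_{i,0}(t^2-mqa)+\delta_{q,-1}\delta_{i,1}b)f(t^2-mq)1$. Then $G_{m,i}1=\lambda^m\delta_{i,0}\,t1$ (i.e. $G_{m,i}1=\lambda^m\delta_{i,0}G_{0,0}1$) for all $m\in\mathbb{Z}$ and $i\in\mathbb{Z}_+$.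
   Context: Fix $q\in\mathbb{C}^*$; $\mathbb{Z}_+=\{0,1,2,\dots\}$; $\delta$ is the Kronecker delta. The Ramond-Block algebra $\mathcal{R}$ is the Lie superalgebra over $\mathbb{C}$ with even basis $\{L_{m,i}\mid m\in\mathbb{Z},i\in\mathbb{Z}_+\}$, odd basis $\{G_{l,j}\mid l\in\mathbb{Z},j\in\mathbb{Z}_+\}$ and brackets $[L_{m,i},L_{n,j}]=(n(i+q)-m(j+q))L_{m+n,i+j}$, $[L_{m,i},G_{l,j}]=(l(i+q)-m(j+\frac{q}{2}))G_{m+l,i+j}$, $[G_{l,i},G_{r,j}]=2qL_{l+r,i+j}$. Modules are supermodules. *)

theory Defs
  imports Complex_Main "HOL-Computational_Algebra.Polynomial"
begin

text \<open>A module over the Ramond-Block algebra R (parameter q), on an abstract complex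
vector space with scalar multiplication smul.  The even basis element L_{m,i} acts by
the linear map L m i, the odd basis element G_{l,j} by G l j.\<close>

definition ramond_block_module ::
  "complex \<Rightarrow> (complex \<Rightarrow> 'v::ab_group_add \<Rightarrow> 'v) \<Rightarrow> 'v set \<Rightarrow> 'v set
   \<Rightarrow> (int \<Rightarrow> nat \<Rightarrow> 'v \<Rightarrow> 'v) \<Rightarrow> (int \<Rightarrow> nat \<Rightarrow> 'v \<Rightarrow> 'v) \<Rightarrow> bool" where
  "ramond_block_module q smul M0 M1 L G \<longleftrightarrow>
     vector_space smul \<and>
     module.subspace smul M0 \<and> module.subspace smul M1 \<and>
     (\<forall>v. \<exists>!p. fst p \<in> M0 \<and> snd p \<in> M1 \<and> v = fst p + snd p) \<and>
     (\<forall>m i. Vector_Spaces.linear smul smul (L m i)) \<and>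
     (\<forall>m i. Vector_Spaces.linear smul smul (G m i)) \<and>
     (\<forall>m i. L m i ` M0 \<subseteq> M0 \<and> L m i ` M1 \<subseteq> M1) \<and>
     (\<forall>m i. G m i ` M0 \<subseteq> M1 \<and> G m i ` M1 \<subseteq> M0) \<and>
     (\<forall>m i n j v. L m i (L n j v) - L n j (L m i v) =
        smul (of_int n * (of_nat i + q) - of_int m * (of_nat j + q)) (L (m + n) (i + j) v)) \<and>
     (\<forall>m i l j v. L m i (G l j v) - G l j (L m i v) =
        smul (of_int l * (of_nat i + q) - of_int m * (of_nat j + q / 2)) (G (m + l) (i + j) v)) \<and>
     (\<forall>l i r j v. G l i (G r j v) + G r j (G l i v) =
        smul (2 * q) (L (l + r) (i + j) v))"

definition poly_op ::
  "(complex \<Rightarrow> 'v::ab_group_add \<Rightarrow> 'v) \<Rightarrow> complex poly \<Rightarrow> ('v \<Rightarrow> 'v) \<Rightarrow> 'v \<Rightarrow> 'v" where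
  "poly_op smul p A v = (\<Sum>k\<le>degree p. smul (coeff p k) ((A ^^ k) v))"

text \<open>M is free of rank one over U(eta), eta = C L_{0,0} + C G_{0,0}, with free
generator w: by PBW, U(eta) has basis L_{0,0}^k G_{0,0}^e (k \<ge> 0, e \<in> {0,1}), so
freeness on w means (p0,p1) \<mapsto> p0(L_{0,0}) w + p1(L_{0,0}) G_{0,0} w is bijective
from C[x] \<times> C[x] onto M.\<close>

definition free_rank_one_over_eta ::
  "(complex \<Rightarrow> 'v::ab_group_add \<Rightarrow> 'v) \<Rightarrow> (int \<Rightarrow> nat \<Rightarrow> 'v \<Rightarrow> 'v) \<Rightarrow> (int \<Rightarrow> nat \<Rightarrow> 'v \<Rightarrow> 'v)
   \<Rightarrow> 'v \<Rightarrow> bool" where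
  "free_rank_one_over_eta smul L G w \<longleftrightarrow>
     bij (\<lambda>(p0, p1). poly_op smul p0 (L 0 0) w + poly_op smul p1 (L 0 0) (G 0 0 w))"

end

theory Submission
  imports Defs
begin

text \<open>
  Parity forces G_{m,i} 1 into the odd part, so G_{m,i} 1 = g(L_{0,0}) G_{0,0} 1 for some polynomial g.
  Write L_{m,i} 1 = P_{m,i}(L_{0,0}) 1. Evaluating the anticommutators of G_{m,i} with G_{0,0}
  and with itself on 1, and moving G_{m,i} past polynomials in L_{0,0} (which shifts x to x - mq),
  freeness yields the polynomial identity
    g(x - mq) (2q P_{m,i}(x) - q x g(x)) = q P_{2m,2i}(x).
  For i > 0 the right side vanishes and P_{m,i} is constant, so g = 0 by degree. For i = 0 both
  P's are linear with leading coefficients \<lambda>^m and \<lambda>^{2m}; comparing degrees makes g a constant c,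
  and the linear coefficients give q (c - \<lambda>^m)^2 = 0.
\<close>

locale complex_vector_space = vector_space scale for scale :: "complex \<Rightarrow> 'v::ab_group_add \<Rightarrow> 'v"
begin

lemma add_self_eq_scale_double_iff: "x + x = scale (2 * c) y \<longleftrightarrow> x = scale c y"
proof -
  have "x + x = scale 2 x"
    by (metis scale_left_distrib scale_one one_add_one)
  then show ?thesis
    by (metis scale_scale scale_left_imp_eq zero_neq_numeral)
qed

lemma poly_op_eq_sum_upto:
  assumes "degree p \<le> N"
  shows "poly_op scale p A v = (\<Sum>k\<le>N. scale (coeff p k) ((A ^^ k) v))"
  unfolding poly_op_def
  by (rule sum.mono_neutral_left) (use assms in \<open>auto simp: coeff_eq_0\<close>)

lemma poly_op_0 [simp]: "poly_op scale 0 A v = 0"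
  by (simp add: poly_op_def)

lemma poly_op_const [simp]: "poly_op scale [:c:] A v = scale c v"
  by (simp add: poly_op_def)

lemma poly_op_1 [simp]: "poly_op scale 1 A v = v"
  by (simp add: one_pCons)

lemma poly_op_add: "poly_op scale (p + r) A v = poly_op scale p A v + poly_op scale r A v"
proof -
  define N where "N = max (degree p) (degree r)"
  have "poly_op scale (p + r) A v = (\<Sum>k\<le>N. scale (coeff (p + r) k) ((A ^^ k) v))"
    by (rule poly_op_eq_sum_upto) (simp add: N_def degree_add_le)
  also have "\<dots> = (\<Sum>k\<le>N. scale (coeff p k) ((A ^^ k) v)) + (\<Sum>k\<le>N. scale (coeff r k) ((A ^^ k) v))"
    by (simp add: scale_left_distrib sum.distrib)
  also have "\<dots> = poly_op scale p A v + poly_op scale r A v"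
    by (simp add: poly_op_eq_sum_upto[symmetric] N_def)
  finally show ?thesis .
qed

lemma poly_op_smult: "poly_op scale (smult c p) A v = scale c (poly_op scale p A v)"
  by (simp add: poly_op_eq_sum_upto[of "smult c p" "degree p"] poly_op_def scale_sum_right)

lemma poly_op_diff: "poly_op scale (p - r) A v = poly_op scale p A v - poly_op scale r A v"
  using poly_op_add[of "p - r" r A v] by (simp add: algebra_simps)

context
  fixes A :: "'v \<Rightarrow> 'v"
  assumes linear_A: "Vector_Spaces.linear scale scale A"
begin

interpretation A: Vector_Spaces.linear scale scale A
  by (fact linear_A)

lemma poly_op_pCons: "poly_op scale (pCons a p) A v = scale a v + A (poly_op scale p A v)"
proof -
  have "poly_op scale (pCons a p) A v
      = (\<Sum>k\<le>Suc (degree p). scale (coeff (pCons a p) k) ((A ^^ k) v))"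
    by (rule poly_op_eq_sum_upto) (simp add: degree_pCons_le)
  also have "\<dots> = scale a v + (\<Sum>k\<le>degree p. scale (coeff p k) (A ((A ^^ k) v)))"
    by (subst sum.atMost_Suc_shift) simp
  also have "\<dots> = scale a v + A (poly_op scale p A v)"
    by (simp add: poly_op_def A.sum A.scale)
  finally show ?thesis .
qed

lemma poly_op_mult: "poly_op scale (p * r) A v = poly_op scale p A (poly_op scale r A v)"
  by (induction p rule: pCons_induct) (simp_all add: poly_op_add poly_op_smult poly_op_pCons)

lemma poly_op_in_subspace:
  assumes "subspace S" "\<And>x. x \<in> S \<Longrightarrow> A x \<in> S" "v \<in> S"
  shows "poly_op scale p A v \<in> S"
  by (induction p rule: pCons_induct)
    (use assms in \<open>simp_all add: poly_op_pCons subspace_0 subspace_add subspace_scale\<close>)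

lemma poly_op_intertwine:
  assumes linear_B: "Vector_Spaces.linear scale scale B"
    and BA: "\<And>u. B (A u) = A (B u) - scale c (B u)"
  shows "B (poly_op scale p A v) = poly_op scale (pcompose p [:-c, 1:]) A (B v)"
proof -
  interpret B: Vector_Spaces.linear scale scale B
    by (fact linear_B)
  show ?thesis
    by (induction p rule: pCons_induct)
      (simp_all add: poly_op_pCons pcompose_pCons poly_op_add poly_op_mult poly_op_diff
        poly_op_smult B.add B.scale BA algebra_simps)
qed

end

end

lemma eq_0_if_pcompose_mult_const_minus_monom_eq_0:
  fixes g h :: "'a::idom poly"
  assumes "q \<noteq> 0" "degree h = 0"
    and "pcompose g [:-s, 1:] * (h - g * [:0, q:]) = 0"
  shows "g = 0"
proof (rule ccontr)
  assume g: "g \<noteq> 0"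
  then have "pcompose g [:-s, 1:] \<noteq> 0"
    using pcompose_eq_0[of g "[:-s, 1:]"] by auto
  with assms(3) have "h = g * [:0, q:]"
    by simp
  moreover have "degree (g * [:0, q:]) = degree g + 1"
    using g assms(1) by (subst degree_mult_eq) auto
  ultimately show False
    using assms(2) by simp
qed

lemma eq_const_if_pcompose_mult_linear_minus_monom_eq:
  fixes g :: "'a::idom poly"
  assumes q: "q \<noteq> 0"
    and eq: "pcompose g [:-s, 1:] * (smult (2 * q) (smult l [:-t, 1:]) - g * [:0, q:])
           = smult q (smult (l\<^sup>2) [:-t', 1:])"
  shows "g = [:l:]"
proof -
  have "degree g = 0"
  proof (rule ccontr)
    assume d: "degree g \<noteq> 0"
    then have g: "g \<noteq> 0"
      by auto
    have "degree (g * [:0, q:]) = degree g + 1"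
      using g q by (subst degree_mult_eq) auto
    moreover have "degree (smult (2 * q) (smult l [:-t, 1:])) \<le> 1"
      by simp
    ultimately have h: "degree (smult (2 * q) (smult l [:-t, 1:]) - g * [:0, q:]) = degree g + 1"
      using d degree_add_eq_right[of "smult (2 * q) (smult l [:-t, 1:])" "- (g * [:0, q:])"]
      by (simp only: diff_conv_add_uminus degree_minus)
    have "degree (pcompose g [:-s, 1:] * (smult (2 * q) (smult l [:-t, 1:]) - g * [:0, q:]))
        = 2 * degree g + 1"
      using g h pcompose_eq_0[of g "[:-s, 1:]"]
      by (subst degree_mult_eq) (auto simp: degree_pcompose)
    moreover have "degree (smult q (smult (l\<^sup>2) [:-t', 1:])) \<le> 1"
      by simp
    ultimately show False
      using eq d by simp
  qed
  then obtain c where c: "g = [:c:]"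
    by (metis degree_eq_zeroE)
  have "coeff (pcompose g [:-s, 1:] * (smult (2 * q) (smult l [:-t, 1:]) - g * [:0, q:])) 1
      = coeff (smult q (smult (l\<^sup>2) [:-t', 1:])) 1"
    using eq by simp
  then have "q * (c - l)\<^sup>2 = 0"
    by (simp add: c power2_eq_square algebra_simps)
  then show ?thesis
    using q c by simp
qed

locale ramond_block_free_eta_module =
  fixes q :: complex
    and smul :: "complex \<Rightarrow> 'v::ab_group_add \<Rightarrow> 'v"
    and M0 M1 :: "'v set"
    and L G :: "int \<Rightarrow> nat \<Rightarrow> 'v \<Rightarrow> 'v"
    and w :: 'v
  assumes module: "ramond_block_module q smul M0 M1 L G"
    and free: "free_rank_one_over_eta smul L G w"
    and generator_even: "w \<in> M0"
begin

sublocale complex_vector_space smul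
  using module by (simp add: ramond_block_module_def complex_vector_space_def)

abbreviation poly_L00 :: "complex poly \<Rightarrow> 'v \<Rightarrow> 'v" where
  "poly_L00 p v \<equiv> poly_op smul p (L 0 0) v"

lemma linear_L: "Vector_Spaces.linear smul smul (L m i)"
  using module by (simp add: ramond_block_module_def)

lemma linear_G: "Vector_Spaces.linear smul smul (G m i)"
  using module by (simp add: ramond_block_module_def)

lemma even_subspace: "subspace M0"
  using module by (simp add: ramond_block_module_def)

lemma odd_subspace: "subspace M1"
  using module by (simp add: ramond_block_module_def)

lemma L_even: "x \<in> M0 \<Longrightarrow> L m i x \<in> M0"
  using module by (simp add: ramond_block_module_def image_subset_iff)

lemma L_odd: "x \<in> M1 \<Longrightarrow> L m i x \<in> M1"
  using module by (simp add: ramond_block_module_def image_subset_iff)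

lemma G_even: "x \<in> M0 \<Longrightarrow> G m i x \<in> M1"
  using module by (simp add: ramond_block_module_def image_subset_iff)

lemma unique_parity_decomposition: "\<exists>!p. fst p \<in> M0 \<and> snd p \<in> M1 \<and> v = fst p + snd p"
  using module by (simp add: ramond_block_module_def)

lemma L_G_commutator: "L m i (G l j v) - G l j (L m i v) =
    smul (of_int l * (of_nat i + q) - of_int m * (of_nat j + q / 2)) (G (m + l) (i + j) v)"
  using module by (simp add: ramond_block_module_def)

lemma G_G_anticommutator: "G l i (G r j v) + G r j (G l i v) = smul (2 * q) (L (l + r) (i + j) v)"
  using module by (simp add: ramond_block_module_def)

lemma L_scale: "L m i (smul c v) = smul c (L m i v)"
  using linear_L[of m i] by (simp add: Vector_Spaces.linear_iff)

lemma L_zero: "L m i 0 = 0"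
  using L_scale[of m i 0 0] by simp

lemma G_square: "G m i (G m i v) = smul q (L (m + m) (i + i) v)"
  using G_G_anticommutator[of m i m i v] add_self_eq_scale_double_iff by blast

lemma G_L00: "G m i (L 0 0 v) = L 0 0 (G m i v) - smul (of_int m * q) (G m i v)"
  using L_G_commutator[of 0 0 m i v] by (simp add: algebra_simps)

lemma G_poly_L00:
  "G m i (poly_L00 p v) = poly_L00 (pcompose p [:-(of_int m * q), 1:]) (G m i v)"
  using G_L00 by (rule poly_op_intertwine[OF linear_L linear_G])

lemma poly_L00_mult: "poly_L00 (p * r) v = poly_L00 p (poly_L00 r v)"
  by (rule poly_op_mult[OF linear_L])

lemma poly_L00_generator_inj: "poly_L00 p w = poly_L00 r w \<Longrightarrow> p = r"
  using bij_is_inj[OF free[unfolded free_rank_one_over_eta_def]]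
  by (auto dest: injD[of _ "(p, 0)" "(r, 0)"])

lemma G_generator_eq_poly_L00:
  obtains g where "G m i w = poly_L00 g (G 0 0 w)"
proof -
  obtain p0 p1 where p: "G m i w = poly_L00 p0 w + poly_L00 p1 (G 0 0 w)"
    using surjD[OF bij_is_surj[OF free[unfolded free_rank_one_over_eta_def]], of "G m i w"]
    by auto
  have "poly_L00 p0 w \<in> M0"
    by (rule poly_op_in_subspace[OF linear_L even_subspace L_even generator_even])
  moreover have "poly_L00 p1 (G 0 0 w) \<in> M1"
    by (rule poly_op_in_subspace[OF linear_L odd_subspace L_odd G_even[OF generator_even]])
  moreover have "G m i w \<in> M1" "0 \<in> M0"
    using G_even[OF generator_even] even_subspace by (auto simp: subspace_0)
  ultimately have "(poly_L00 p0 w, poly_L00 p1 (G 0 0 w)) = (0, G m i w)"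
    using unique_parity_decomposition[of "G m i w"] p by (metis add_0 fst_conv snd_conv)
  then have "poly_L00 p0 w = poly_L00 0 w"
    by simp
  then have "p0 = 0"
    by (rule poly_L00_generator_inj)
  with p show ?thesis
    using that by simp
qed

lemma G_generator_polynomial_identity:
  assumes g: "G m i w = poly_L00 g (G 0 0 w)"
    and L1: "L m i w = poly_L00 P1 w"
    and L2: "L (m + m) (i + i) w = poly_L00 P2 w"
  shows "pcompose g [:-(of_int m * q), 1:] * (smult (2 * q) P1 - g * [:0, q:]) = smult q P2"
proof -
  have "poly_L00 [:0, q:] w = smul q (L 0 0 w)"
    by (simp add: poly_op_pCons[OF linear_L] L_scale L_zero)
  then have G00_G: "G 0 0 (G m i w) = poly_L00 (g * [:0, q:]) w"
    using G_square[of 0 0 w] by (simp add: g G_poly_L00 poly_L00_mult del: mult_pCons_right)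
  have G_G00: "G m i (G 0 0 w) = poly_L00 (smult (2 * q) P1 - g * [:0, q:]) w"
    using G_G_anticommutator[of m i 0 0 w]
    by (simp add: G00_G L1 poly_op_diff poly_op_smult eq_diff_eq)
  have "poly_L00 (pcompose g [:-(of_int m * q), 1:] * (smult (2 * q) P1 - g * [:0, q:])) w
      = G m i (G m i w)"
    by (simp add: g G_poly_L00 G_G00 poly_L00_mult)
  also have "\<dots> = smul q (L (m + m) (i + i) w)"
    by (rule G_square)
  also have "\<dots> = poly_L00 (smult q P2) w"
    by (simp only: L2 poly_op_smult)
  finally show ?thesis
    by (rule poly_L00_generator_inj)
qed

end

theorem lemma3p4:
  fixes q lam a b :: complex
    and smul :: "complex \<Rightarrow> 'v::ab_group_add \<Rightarrow> 'v"
    and M0 M1 :: "'v set"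
    and L G :: "int \<Rightarrow> nat \<Rightarrow> 'v \<Rightarrow> 'v"
    and w :: 'v
  assumes "q \<noteq> 0"
    and "ramond_block_module q smul M0 M1 L G"
    and "free_rank_one_over_eta smul L G w"
    and "w \<in> M0"
    and "lam \<noteq> 0"
    and "\<And>m i f. L m i (poly_op smul f (L 0 0) w) =
           poly_op smul
             (smult (lam powi m)
                ((if i = 0 then [:- (of_int m * q * a), 1:] else 0)
                 + (if q = -1 \<and> i = 1 then [:b:] else 0))
              * pcompose f [:- (of_int m * q), 1:])
             (L 0 0) w"
  shows "\<forall>m i. G m i w = smul (if i = 0 then lam powi m else 0) (G 0 0 w)"
proof -
  interpret ramond_block_free_eta_module q smul M0 M1 L G w
    using assms(2-4) by unfold_locales
  define P where "P m i = smult (lam powi m)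
    ((if i = 0 then [:- (of_int m * q * a), 1:] else 0) + (if q = -1 \<and> i = 1 then [:b:] else 0))"
    for m :: int and i :: nat
  have L_generator: "L m i w = poly_L00 (P m i) w" for m i
    using assms(6)[of m i 1] by (simp add: P_def pcompose_1)
  have "G m i w = smul (if i = 0 then lam powi m else 0) (G 0 0 w)" for m i
  proof -
    obtain g where g: "G m i w = poly_L00 g (G 0 0 w)"
      by (rule G_generator_eq_poly_L00)
    note identity = G_generator_polynomial_identity[OF g L_generator L_generator]
    show ?thesis
    proof (cases "i = 0")
      case True
      have "lam powi (m + m) = (lam powi m)\<^sup>2"
        using assms(5) power_int_add[of lam m m] by (simp add: power2_eq_square)
      with True have P1: "P m i = smult (lam powi m) [:- (of_int m * q * a), 1:]"
        and P2: "P (m + m) (i + i) = smult ((lam powi m)\<^sup>2) [:- (of_int (m + m) * q * a), 1:]"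
        by (simp_all add: P_def)
      have "g = [:lam powi m:]"
        using identity unfolding P1 P2 by (rule eq_const_if_pcompose_mult_linear_minus_monom_eq[OF assms(1)])
      with g True show ?thesis
        by simp
    next
      case False
      then have P2: "P (m + m) (i + i) = 0" and const: "degree (smult (2 * q) (P m i)) = 0"
        by (simp_all add: P_def)
      have "g = 0"
        using identity unfolding P2 smult_0_right
        by (rule eq_0_if_pcompose_mult_const_minus_monom_eq_0[OF assms(1) const])
      with g False show ?thesis
        by simp
    qed
  qed
  then show ?thesis
    by blast
qed

end
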